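(* Let $0<\kappa<\frac13$ and define $g:\mathbb{R}\to\mathbb{R}$ by $g(t)=\sqrt{1-\kappa t^2}$ if $0\leq t<1$, $g(t)=\frac{\kappa}{t\sqrt{1-\kappa}}+\frac{1-2\kappa}{\sqrt{1-\kappa}}$ if $t\geq1$, and $g(t)=g(-t)$ for $t<0$. Let $G(t)=\int_0^tg(s)\,ds$ and $G^{-1}$ its inverse. Then: (1) $\lim_{t\to0}\frac{G^{-1}(t)}{t}=1$; (2) $\lim_{t\to\infty}\frac{G^{-1}(t)}{t}=\frac{\sqrt{1-\kappa}}{1-2\kappa}$; (3) $t\leq G^{-1}(t)\leq 3t$ for all $t\geq0$; (4) $-\frac32\leq\frac{t}{g(t)}g'(t)\leq0$ for all $t\geq0$.
   Context: The function $g$ is $C^1$, even, with values in $(\frac{1-2\kappa}{\sqrt{1-\kappa}},1]$, and $G$ is a strictly increasing odd bijection of $\mathbb{R}$. *)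

theory Defs
  imports "HOL-Analysis.Analysis"
begin

definition gk :: "real \<Rightarrow> real \<Rightarrow> real" where
  "gk \<kappa> t = (let s = \<bar>t\<bar> in
     if s < 1 then sqrt (1 - \<kappa> * s\<^sup>2)
     else \<kappa> / (s * sqrt (1 - \<kappa>)) + (1 - 2 * \<kappa>) / sqrt (1 - \<kappa>))"

definition Gk :: "real \<Rightarrow> real \<Rightarrow> real" where
  "Gk \<kappa> t = (if 0 \<le> t then integral {0..t} (gk \<kappa>) else - integral {t..0} (gk \<kappa>))"

end

theory Submission
  imports Defs
begin

text \<open>Since 1/3 \<le> g \<le> 1, G is an increasing bi-Lipschitz bijection with t/3 \<le> G t \<le> t
  for t \<ge> 0, which inverts to (3). Part (1) is the inverse function theorem at 0, where
  G'(0) = g(0) = 1. For (2), L'Hospital's rule gives G(t)/t \<rightarrow> lim g = (1 - 2\<kappa>)/sqrt(1 - \<kappa>),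
  and the inverse of G tends to infinity by (3). For (4), t g'(t)/g(t) equals
  -\<kappa>t^2/(1 - \<kappa>t^2) on [0,1) and -\<kappa>/(\<kappa> + (1 - 2\<kappa>)t) on [1,\<infinity>).\<close>

lemma has_real_derivative_glue:
  fixes f :: "real \<Rightarrow> real"
  assumes "(f has_real_derivative D) (at x within {..x})"
    and "(f has_real_derivative D) (at x within {x..})"
  shows "(f has_real_derivative D) (at x)"
proof -
  have "(f has_real_derivative D) (at x within ({..x} \<union> {x..}))"
    using assms unfolding has_field_derivative_iff Lim_within_Un by simp
  moreover have "{..x} \<union> {x..} = (UNIV :: real set)" by auto
  ultimately show ?thesis by simp
qed

lemma oriented_integral_has_real_derivative:
  fixes g :: "real \<Rightarrow> real"
  assumes cont: "continuous_on UNIV g"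
  shows "((\<lambda>t. if 0 \<le> t then integral {0..t} g else - integral {t..0} g)
           has_real_derivative g x) (at x)"
proof -
  define a where "a = min x 0 - 1"
  have a: "a < x" "a < 0" unfolding a_def by auto
  have int: "g integrable_on {c..d}" for c d
    using cont by (auto intro: integrable_continuous_real continuous_on_subset)
  have "((\<lambda>u. integral {a..u} g) has_real_derivative g x) (at x within {a..max x 0 + 1})"
    by (rule integral_has_real_derivative) (use a cont in \<open>auto intro: continuous_on_subset\<close>)
  moreover have "at x within {a..max x 0 + 1} = at x"
    by (rule at_within_interior) (use a in simp)
  ultimately have "((\<lambda>u. integral {a..u} g - integral {a..0} g) has_real_derivative g x) (at x)"
    by (auto intro!: derivative_eq_intros)
  then show ?thesis
  proof (rule has_field_derivative_transform_within_open[where S = "{a<..}"])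
    fix u assume u: "u \<in> {a<..}"
    show "integral {a..u} g - integral {a..0} g
          = (if 0 \<le> u then integral {0..u} g else - integral {u..0} g)"
    proof (cases "0 \<le> u")
      case True
      then have "integral {a..0} g + integral {0..u} g = integral {a..u} g"
        using a int by (intro Henstock_Kurzweil_Integration.integral_combine) auto
      then show ?thesis using True by simp
    next
      case False
      then have "integral {a..u} g + integral {u..0} g = integral {a..0} g"
        using u int by (intro Henstock_Kurzweil_Integration.integral_combine) auto
      then show ?thesis using False by simp
    qed
  qed (use a in auto)
qed

lemma increment_ge_of_DERIV_ge:
  fixes f :: "real \<Rightarrow> real"
  assumes "\<And>x. (f has_real_derivative f' x) (at x)" "\<And>x. m \<le> f' x" "a \<le> b"
  shows "m * (b - a) \<le> f b - f a"
proof -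
  have "f a - m * a \<le> f b - m * b"
    by (rule DERIV_nonneg_imp_nondecreasing[OF \<open>a \<le> b\<close>])
       (use assms in \<open>auto intro!: exI[of _ "f' _ - m"] derivative_eq_intros\<close>)
  then show ?thesis by (simp add: algebra_simps)
qed

lemma increment_le_of_DERIV_le:
  fixes f :: "real \<Rightarrow> real"
  assumes "\<And>x. (f has_real_derivative f' x) (at x)" "\<And>x. f' x \<le> M" "a \<le> b"
  shows "f b - f a \<le> M * (b - a)"
proof -
  have "((\<lambda>x. - f x) has_real_derivative - f' x) (at x)" for x
    using assms(1) by (rule DERIV_minus)
  then show ?thesis
    using increment_ge_of_DERIV_ge[of "\<lambda>x. - f x" "\<lambda>x. - f' x" "- M" a b] assms(2,3)
    by simp
qed

lemma bij_of_DERIV_ge_pos: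
  fixes f :: "real \<Rightarrow> real"
  assumes deriv: "\<And>x. (f has_real_derivative f' x) (at x)"
    and "0 < m" and ge: "\<And>x. m \<le> f' x"
  shows "bij f"
proof (rule bijI)
  have "f a < f b" if "a < b" for a b
  proof -
    have "0 < m * (b - a)" using \<open>0 < m\<close> that by simp
    then show ?thesis using increment_ge_of_DERIV_ge[OF deriv ge, of a b] that by linarith
  qed
  then show "inj f"
    by (intro strict_mono_imp_inj_on) (simp add: strict_mono_def)
  have cont: "isCont f x" for x
    using deriv DERIV_isCont by blast
  show "surj f"
  proof (rule surjI[where f = "\<lambda>y. SOME x. f x = y"], rule someI_ex)
    fix y
    define x where "x = (y - f 0) / m"
    have step: "m * x = y - f 0" unfolding x_def using \<open>0 < m\<close> by simp
    show "\<exists>x. f x = y"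
    proof (cases "f 0 \<le> y")
      case True
      then have "0 \<le> x" "y \<le> f x"
        using increment_ge_of_DERIV_ge[OF deriv ge, of 0 x] step \<open>0 < m\<close> by (auto simp: x_def)
      then show ?thesis
        using IVT[of f 0 y x] True cont by auto
    next
      case False
      then have "x \<le> 0"
        using \<open>0 < m\<close> by (simp add: x_def divide_nonpos_pos)
      then have "f x \<le> y"
        using increment_ge_of_DERIV_ge[OF deriv ge, of x 0] step by simp
      then show ?thesis
        using IVT[of f x y 0] \<open>x \<le> 0\<close> False cont by auto
    qed
  qed
qed

lemma inv_div_tendsto_at_0:
  fixes f :: "real \<Rightarrow> real"
  assumes "bij f" "f 0 = 0"
    and deriv: "\<And>x. (f has_real_derivative f' x) (at x)" and "f' 0 \<noteq> 0"
  shows "((\<lambda>t. inv f t / t) \<longlongrightarrow> 1 / f' 0) (at 0)"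
proof -
  have inv_f: "inv f (f x) = x" "f (inv f y) = y" for x y
    using \<open>bij f\<close> by (simp_all add: bij_is_inj bij_is_surj surj_f_inv_f)
  then have inv_0: "inv f 0 = 0" using \<open>f 0 = 0\<close> by metis
  have "isCont (inv f) (f 0)"
    by (rule isCont_inverse_function2[of "-1" 0 1]) (use inv_f deriv[THEN DERIV_isCont] in auto)
  then have "DERIV (inv f) 0 :> inverse (f' 0)"
    using deriv[of 0] inv_f inv_0 \<open>f 0 = 0\<close> \<open>f' 0 \<noteq> 0\<close>
    by (intro DERIV_inverse_function[where a = "-1" and b = 1]) auto
  then show ?thesis
    unfolding has_field_derivative_iff using inv_0 by (simp add: divide_inverse)
qed

lemma inv_div_tendsto_at_top:
  fixes f :: "real \<Rightarrow> real"
  assumes "surj f" and inv_lim: "filterlim (inv f) at_top at_top"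
    and slope: "((\<lambda>x. f x / x) \<longlongrightarrow> L) at_top" and "L \<noteq> 0"
  shows "((\<lambda>t. inv f t / t) \<longlongrightarrow> 1 / L) at_top"
proof -
  have "((\<lambda>t. f (inv f t) / inv f t) \<longlongrightarrow> L) at_top"
    using filterlim_compose[OF slope inv_lim] by simp
  then have "((\<lambda>t. t / inv f t) \<longlongrightarrow> L) at_top"
    using \<open>surj f\<close> by (simp add: surj_f_inv_f)
  then have "((\<lambda>t. inverse (t / inv f t)) \<longlongrightarrow> inverse L) at_top"
    using \<open>L \<noteq> 0\<close> by (rule tendsto_inverse)
  then show ?thesis by (simp add: field_simps)
qed

lemma slope_tendsto_of_deriv_tendsto:
  fixes f :: "real \<Rightarrow> real"
  assumes "\<And>x. (f has_real_derivative f' x) (at x)" "(f' \<longlongrightarrow> c) at_top"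
  shows "((\<lambda>x. f x / x) \<longlongrightarrow> c) at_top"
  using lhospital_at_top_at_top[of "\<lambda>x. x" "\<lambda>_. 1" f f' c] assms by (auto intro: filterlim_ident)

lemma gk_abs [simp]: "gk \<kappa> \<bar>t\<bar> = gk \<kappa> t"
  by (simp add: gk_def)

lemma gk_less_1: "0 \<le> t \<Longrightarrow> t < 1 \<Longrightarrow> gk \<kappa> t = sqrt (1 - \<kappa> * t\<^sup>2)"
  by (simp add: gk_def)

lemma gk_ge_1: "1 \<le> t \<Longrightarrow> gk \<kappa> t = \<kappa> / sqrt (1 - \<kappa>) / t + (1 - 2 * \<kappa>) / sqrt (1 - \<kappa>)"
  by (simp add: gk_def)

lemma Gk_0 [simp]: "Gk \<kappa> 0 = 0"
  by (simp add: Gk_def)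

text \<open>The derivative of \<open>gk \<kappa>\<close> for \<open>t \<ge> 0\<close> only.\<close>

definition gk_deriv :: "real \<Rightarrow> real \<Rightarrow> real" where
  "gk_deriv \<kappa> t = (if t < 1 then - \<kappa> * t / sqrt (1 - \<kappa> * t\<^sup>2) else - \<kappa> / sqrt (1 - \<kappa>) / t\<^sup>2)"

context
  fixes \<kappa> :: real
  assumes kappa_pos: "0 < \<kappa>" and kappa_less: "\<kappa> < 1/3"
begin

lemma kappa_mult_sq_less: "\<bar>t\<bar> \<le> 1 \<Longrightarrow> \<kappa> * t\<^sup>2 < 1/3"
proof -
  assume "\<bar>t\<bar> \<le> 1"
  then have "\<kappa> * t\<^sup>2 \<le> \<kappa>"
    using kappa_pos by (simp add: abs_square_le_1 mult_left_le)
  then show ?thesis using kappa_less by linarith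
qed

lemma gk_bounds: "1/3 \<le> gk \<kappa> t \<and> gk \<kappa> t \<le> 1"
proof (cases "\<bar>t\<bar> < 1")
  case True
  then have "1/9 \<le> 1 - \<kappa> * \<bar>t\<bar>\<^sup>2" "1 - \<kappa> * \<bar>t\<bar>\<^sup>2 \<le> 1"
    using kappa_mult_sq_less[of "\<bar>t\<bar>"] kappa_pos by auto
  then have "sqrt (1/9) \<le> sqrt (1 - \<kappa> * \<bar>t\<bar>\<^sup>2)" "sqrt (1 - \<kappa> * \<bar>t\<bar>\<^sup>2) \<le> 1"
    by (auto intro: real_sqrt_le_mono)
  moreover have "sqrt (1/9) = (1/3 :: real)"
    by (simp add: real_sqrt_divide)
  ultimately show ?thesis
    using True by (simp add: gk_def)
next
  case False
  define r where "r = sqrt (1 - \<kappa>)"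
  have r: "0 < r" "r \<le> 1" "r * r = 1 - \<kappa>"
    unfolding r_def using kappa_pos kappa_less by auto
  have "gk \<kappa> t = \<kappa> / r / \<bar>t\<bar> + (1 - 2 * \<kappa>) / r"
    using gk_ge_1[of "\<bar>t\<bar>" \<kappa>] False by (simp add: r_def)
  moreover have "0 \<le> \<kappa> / r / \<bar>t\<bar>" "\<kappa> / r / \<bar>t\<bar> \<le> \<kappa> / r"
    using kappa_pos r False by (auto simp: divide_le_eq)
  moreover have "1 - 2 * \<kappa> \<le> (1 - 2 * \<kappa>) / r"
    using kappa_less r by (simp add: le_divide_eq mult_left_le)
  moreover have "\<kappa> / r + (1 - 2 * \<kappa>) / r = r"
    using r by (simp add: field_simps)
  ultimately show ?thesis
    using r kappa_less by linarith
qed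

lemma gk_has_real_derivative:
  assumes "0 \<le> t"
  shows "(gk \<kappa> has_real_derivative gk_deriv \<kappa> t) (at t)"
proof -
  let ?inner = "\<lambda>x. sqrt (1 - \<kappa> * x\<^sup>2)"
  let ?outer = "\<lambda>x. \<kappa> / sqrt (1 - \<kappa>) / x + (1 - 2 * \<kappa>) / sqrt (1 - \<kappa>)"
  have inner: "(?inner has_real_derivative - \<kappa> * t / sqrt (1 - \<kappa> * t\<^sup>2)) (at t)" if "t \<le> 1"
    using kappa_mult_sq_less[of t] that assms
    by (auto intro!: derivative_eq_intros simp: field_simps)
  have hyperbola: "((\<lambda>x. c / x + d) has_real_derivative - c / t\<^sup>2) (at t)" if "0 < t" for c d
    using that by (auto intro!: derivative_eq_intros simp: field_simps power2_eq_square)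
  have outer: "(?outer has_real_derivative - \<kappa> / sqrt (1 - \<kappa>) / t\<^sup>2) (at t)" if "0 < t"
    using hyperbola[OF that, of "\<kappa> / sqrt (1 - \<kappa>)"] by simp
  consider "t < 1" | "1 < t" | "t = 1" by linarith
  then show ?thesis
  proof cases
    case 1
    with inner show ?thesis
      by (rule_tac has_field_derivative_transform_within_open[where S = "{-1<..<1}"])
         (use assms in \<open>auto simp: gk_deriv_def gk_def abs_less_iff\<close>)
  next
    case 2
    with outer show ?thesis
      by (rule_tac has_field_derivative_transform_within_open[where S = "{1<..}"])
         (auto simp: gk_deriv_def gk_ge_1)
  next
    case 3
    have pieces_agree: "?inner 1 = ?outer 1"
      using kappa_less by (simp add: field_simps real_div_sqrt)
    show ?thesis
    proof (rule has_real_derivative_glue)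
      show "(gk \<kappa> has_real_derivative gk_deriv \<kappa> t) (at t within {..t})"
        using inner 3 pieces_agree
        by (rule_tac has_field_derivative_transform_within[where d = 1 and f = ?inner])
           (auto simp: gk_deriv_def gk_def dist_real_def has_field_derivative_at_within)
      show "(gk \<kappa> has_real_derivative gk_deriv \<kappa> t) (at t within {t..})"
        using outer 3
        by (rule_tac has_field_derivative_transform_within[where d = 1 and f = ?outer])
           (auto simp: gk_deriv_def gk_ge_1 has_field_derivative_at_within)
    qed
  qed
qed

lemma continuous_on_gk: "continuous_on UNIV (gk \<kappa>)"
proof -
  have "isCont (\<lambda>x. gk \<kappa> \<bar>x\<bar>) t" for t
    by (rule isCont_o2[OF isCont_rabs[OF continuous_ident] DERIV_isCont[OF gk_has_real_derivative]]) simp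
  then show ?thesis
    by (simp add: continuous_at_imp_continuous_on)
qed

lemma Gk_has_real_derivative: "(Gk \<kappa> has_real_derivative gk \<kappa> x) (at x)"
  using oriented_integral_has_real_derivative[OF continuous_on_gk, of x]
  by (simp add: Gk_def[abs_def])

lemma bij_Gk: "bij (Gk \<kappa>)"
  using bij_of_DERIV_ge_pos[OF Gk_has_real_derivative, of "1/3"] gk_bounds by simp

lemma Gk_bounds:
  assumes "0 \<le> x"
  shows "x / 3 \<le> Gk \<kappa> x \<and> Gk \<kappa> x \<le> x"
  using increment_ge_of_DERIV_ge[OF Gk_has_real_derivative, of "1/3" 0 x]
    increment_le_of_DERIV_le[OF Gk_has_real_derivative, of 1 0 x] gk_bounds assms
  by auto

lemma inv_Gk_bounds:
  assumes "0 \<le> t"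
  shows "t \<le> inv (Gk \<kappa>) t \<and> inv (Gk \<kappa>) t \<le> 3 * t"
proof -
  define x where "x = inv (Gk \<kappa>) t"
  have Gx: "Gk \<kappa> x = t"
    unfolding x_def using bij_Gk by (simp add: bij_is_surj surj_f_inv_f)
  have "0 \<le> x"
  proof (rule ccontr)
    assume "\<not> 0 \<le> x"
    then have "Gk \<kappa> x < 0"
      using increment_ge_of_DERIV_ge[OF Gk_has_real_derivative, of "1/3" x 0] gk_bounds by auto
    then show False using Gx assms by simp
  qed
  then show ?thesis
    using Gk_bounds[of x] Gx unfolding x_def by auto
qed

lemma gk_tendsto_at_top: "(gk \<kappa> \<longlongrightarrow> (1 - 2 * \<kappa>) / sqrt (1 - \<kappa>)) at_top"
proof (rule Lim_transform_eventually)
  show "((\<lambda>x. \<kappa> / sqrt (1 - \<kappa>) / x + (1 - 2 * \<kappa>) / sqrt (1 - \<kappa>))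
          \<longlongrightarrow> (1 - 2 * \<kappa>) / sqrt (1 - \<kappa>)) at_top"
  proof -
    have "((\<lambda>x. \<kappa> / sqrt (1 - \<kappa>) / x) \<longlongrightarrow> 0) at_top"
      by (intro tendsto_divide_0[OF tendsto_const] filterlim_at_top_imp_at_infinity filterlim_ident)
    from tendsto_add[OF this tendsto_const] show ?thesis by simp
  qed
  show "\<forall>\<^sub>F x in at_top. \<kappa> / sqrt (1 - \<kappa>) / x + (1 - 2 * \<kappa>) / sqrt (1 - \<kappa>) = gk \<kappa> x"
    using eventually_ge_at_top[of 1] by eventually_elim (simp add: gk_ge_1)
qed

lemma gk_elasticity_bounds:
  assumes "0 \<le> t"
  shows "-3/2 \<le> t / gk \<kappa> t * deriv (gk \<kappa>) t \<and> t / gk \<kappa> t * deriv (gk \<kappa>) t \<le> 0"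
proof -
  have deriv: "deriv (gk \<kappa>) t = gk_deriv \<kappa> t"
    using gk_has_real_derivative[OF assms] by (rule DERIV_imp_deriv)
  show ?thesis
  proof (cases "t < 1")
    case True
    define q where "q = sqrt (1 - \<kappa> * t\<^sup>2)"
    have q: "0 < q" "q * q = 1 - \<kappa> * t\<^sup>2"
      unfolding q_def using kappa_mult_sq_less[of t] True assms by auto
    have "t / gk \<kappa> t * deriv (gk \<kappa>) t = - (\<kappa> * t\<^sup>2) / (q * q)"
      using True q(1)
      unfolding deriv gk_less_1[OF assms True] gk_deriv_def q_def[symmetric]
      by (simp add: power2_eq_square)
    moreover have "0 \<le> \<kappa> * t\<^sup>2" "\<kappa> * t\<^sup>2 \<le> 3/2 * (q * q)"
      using kappa_pos kappa_mult_sq_less[of t] True assms q(2) by auto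
    ultimately show ?thesis
      using q by (simp add: divide_le_eq)
  next
    case False
    define r where "r = sqrt (1 - \<kappa>)"
    have r: "0 < r" "r * r = 1 - \<kappa>"
      unfolding r_def using kappa_less by auto
    have "t / gk \<kappa> t * deriv (gk \<kappa>) t = - \<kappa> / (\<kappa> + (1 - 2 * \<kappa>) * t)"
      using False r kappa_less unfolding deriv
      by (simp add: gk_ge_1 gk_deriv_def r_def[symmetric] power2_eq_square field_simps)
    moreover have "0 \<le> (1 - 2 * \<kappa>) * t"
      using False kappa_less by simp
    then have "0 \<le> \<kappa> / (\<kappa> + (1 - 2 * \<kappa>) * t)" "\<kappa> / (\<kappa> + (1 - 2 * \<kappa>) * t) \<le> 1"
      using kappa_pos by (simp_all add: divide_le_eq)
    ultimately show ?thesis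
      by linarith
  qed
qed

end

theorem lemma4p1:
  fixes \<kappa> :: real
  assumes "0 < \<kappa>" and "\<kappa> < 1/3"
  shows "((\<lambda>t. inv (Gk \<kappa>) t / t) \<longlongrightarrow> 1) (at 0)
    \<and> ((\<lambda>t. inv (Gk \<kappa>) t / t) \<longlongrightarrow> sqrt (1 - \<kappa>) / (1 - 2 * \<kappa>)) at_top
    \<and> (\<forall>t\<ge>0. t \<le> inv (Gk \<kappa>) t \<and> inv (Gk \<kappa>) t \<le> 3 * t)
    \<and> (\<forall>t\<ge>0. -3/2 \<le> t / gk \<kappa> t * deriv (gk \<kappa>) t
                \<and> t / gk \<kappa> t * deriv (gk \<kappa>) t \<le> 0)"
proof -
  note G' = Gk_has_real_derivative[OF assms]
  have inv_bounds: "\<forall>t\<ge>0. t \<le> inv (Gk \<kappa>) t \<and> inv (Gk \<kappa>) t \<le> 3 * t"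
    using inv_Gk_bounds[OF assms] by blast
  have at_0: "((\<lambda>t. inv (Gk \<kappa>) t / t) \<longlongrightarrow> 1) (at 0)"
    using inv_div_tendsto_at_0[OF bij_Gk[OF assms] Gk_0 G'] by (simp add: gk_def)
  have "filterlim (inv (Gk \<kappa>)) at_top at_top"
    using inv_bounds
    by (intro filterlim_at_top_mono[OF filterlim_ident] eventually_at_top_linorderI[of 0]) auto
  moreover have "((\<lambda>x. Gk \<kappa> x / x) \<longlongrightarrow> (1 - 2 * \<kappa>) / sqrt (1 - \<kappa>)) at_top"
    using slope_tendsto_of_deriv_tendsto[OF G' gk_tendsto_at_top[OF assms]] .
  ultimately have "((\<lambda>t. inv (Gk \<kappa>) t / t) \<longlongrightarrow> 1 / ((1 - 2 * \<kappa>) / sqrt (1 - \<kappa>))) at_top"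
    using assms by (intro inv_div_tendsto_at_top[OF bij_is_surj[OF bij_Gk[OF assms]]]) auto
  then have at_top: "((\<lambda>t. inv (Gk \<kappa>) t / t) \<longlongrightarrow> sqrt (1 - \<kappa>) / (1 - 2 * \<kappa>)) at_top"
    by simp
  show ?thesis
    using at_0 at_top inv_bounds gk_elasticity_bounds[OF assms] by blast
qed

end
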